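(* Let $\alpha\ge2$, $k\ge2$ and $0\le t<\alpha$ be integers and $n=k\alpha+t$. Then $$\lambda_{n,\alpha}\le\begin{cases}k-1+\dfrac{2}{k-1}, & t=0,\\[2mm] k+\dfrac{2}{k}, & 1\le t<\alpha.\end{cases}$$
   Context: All graphs are finite and simple; $\lambda(G)$ is the spectral radius of the adjacency matrix of $G$. For integers $n\ge\alpha\ge1$, $\mathcal{G}_{n,\alpha}$ is the set of all connected graphs of order $n$ with independence number $\alpha$, and $\lambda_{n,\alpha}=\min\{\lambda(G):G\in\mathcal{G}_{n,\alpha}\}$. *)

theory Defs
  imports "Jordan_Normal_Form.Spectral_Radius"
begin

definition simple_graph :: "nat \<Rightarrow> nat set set \<Rightarrow> bool" where
  "simple_graph n E \<longleftrightarrow> (\<forall>e\<in>E. \<exists>u v. e = {u, v} \<and> u \<noteq> v \<and> u < n \<and> v < n)"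

definition adj_rel :: "nat set set \<Rightarrow> (nat \<times> nat) set" where
  "adj_rel E = {(u, v). {u, v} \<in> E}"

definition connected_graph :: "nat \<Rightarrow> nat set set \<Rightarrow> bool" where
  "connected_graph n E \<longleftrightarrow> (\<forall>u<n. \<forall>v<n. (u, v) \<in> (adj_rel E)\<^sup>*)"

definition independent_set :: "nat \<Rightarrow> nat set set \<Rightarrow> nat set \<Rightarrow> bool" where
  "independent_set n E S \<longleftrightarrow> S \<subseteq> {0..<n} \<and> (\<forall>u\<in>S. \<forall>v\<in>S. {u, v} \<notin> E)"

definition independence_number :: "nat \<Rightarrow> nat set set \<Rightarrow> nat" where
  "independence_number n E = Max (card ` {S. independent_set n E S})"

definition adjacency_matrix :: "nat \<Rightarrow> nat set set \<Rightarrow> complex mat" where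
  "adjacency_matrix n E = mat n n (\<lambda>(i, j). if {i, j} \<in> E then 1 else 0)"

definition graph_spectral_radius :: "nat \<Rightarrow> nat set set \<Rightarrow> real" where
  "graph_spectral_radius n E = spectral_radius (adjacency_matrix n E)"

definition graph_class :: "nat \<Rightarrow> nat \<Rightarrow> nat set set set" where
  "graph_class n \<alpha> = {E. simple_graph n E \<and> connected_graph n E \<and> independence_number n E = \<alpha>}"

definition lambda_min :: "nat \<Rightarrow> nat \<Rightarrow> real" where
  "lambda_min n \<alpha> = Min (graph_spectral_radius n ` graph_class n \<alpha>)"

end

theory Submission
  imports Defs
begin

text \<open>The bound is attained by a chain of cliques: cut the vertices into \<open>\<alpha>\<close> consecutive blocks,
  \<open>t\<close> of order \<open>k + 1\<close> and \<open>\<alpha> - t\<close> of order \<open>k\<close>, make each block a clique and join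
  consecutive vertices. Choosing one vertex per block shows that the independence number is \<open>\<alpha>\<close>.
  Let \<open>m\<close> be the largest block order and weight the two end vertices of each block by \<open>m\<close>, all
  other vertices by \<open>m - 1\<close>. A block has weight at most \<open>(m - 1) m + 2\<close>, and only an end vertex
  has a neighbour outside its block, so \<open>(A x)\<^sub>v \<le> (m - 1) x\<^sub>v + 2 \<le> (m - 1 + 2 / (m - 1)) x\<^sub>v\<close>;
  by the Collatz--Wielandt bound this dominates the spectral radius.\<close>

lemma spectral_radius_le_weighted_row_bound:
  fixes A :: "complex mat" and x :: "nat \<Rightarrow> real"
  assumes A: "A \<in> carrier_mat n n" and n: "n > 0"
    and x_pos: "\<And>i. i < n \<Longrightarrow> x i > 0"
    and row: "\<And>i. i < n \<Longrightarrow> (\<Sum>j<n. norm (A $$ (i, j)) * x j) \<le> c * x i"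
  shows "spectral_radius A \<le> c"
proof -
  obtain ev where ev: "ev \<in> spectrum A" and sr: "spectral_radius A = norm ev"
    using spectral_radius_mem_max(1)[OF A n] by auto
  then obtain v where v: "v \<in> carrier_vec n" "v \<noteq> 0\<^sub>v n" "A *\<^sub>v v = ev \<cdot>\<^sub>v v"
    unfolding spectrum_def eigenvalue_def eigenvector_def using A by auto
  define r where "r j = norm (v $ j) / x j" for j
  define M where "M = Max (r ` {0..<n})"
  have r_le: "r j \<le> M" if "j < n" for j
    unfolding M_def using that by auto
  have "M \<in> r ` {0..<n}"
    unfolding M_def using n by (intro Max_in) auto
  then obtain i where i: "i < n" "r i = M"
    by auto
  obtain j where j: "j < n" "v $ j \<noteq> 0"
    using v(1,2) by (metis carrier_vecD eq_vecI index_zero_vec)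
  have "r j > 0"
    using x_pos[OF j(1)] j(2) by (simp add: r_def)
  then have "M > 0"
    using r_le[OF j(1)] by linarith
  have v_i: "norm (v $ i) = M * x i"
    using i x_pos[OF i(1)] by (auto simp: r_def field_simps)
  have v_le: "norm (v $ j) \<le> M * x j" if "j < n" for j
    using r_le[OF that] x_pos[OF that] by (simp add: r_def field_simps)
  have "ev * v $ i = (\<Sum>j<n. A $$ (i, j) * v $ j)"
    using arg_cong[OF v(3), of "\<lambda>w. w $ i"] A v(1) i
    by (auto simp: scalar_prod_def lessThan_atLeast0)
  then have "norm ev * norm (v $ i) = norm (\<Sum>j<n. A $$ (i, j) * v $ j)"
    by (simp add: norm_mult[symmetric])
  also have "\<dots> \<le> (\<Sum>j<n. norm (A $$ (i, j)) * norm (v $ j))"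
    by (rule order_trans[OF norm_sum]) (simp add: norm_mult)
  also have "\<dots> \<le> (\<Sum>j<n. norm (A $$ (i, j)) * (M * x j))"
    by (intro sum_mono mult_left_mono v_le) auto
  also have "\<dots> = M * (\<Sum>j<n. norm (A $$ (i, j)) * x j)"
    by (simp add: sum_distrib_left mult_ac)
  also have "\<dots> \<le> M * (c * x i)"
    using row[OF i(1)] \<open>M > 0\<close> by simp
  finally have "norm ev * (M * x i) \<le> c * (M * x i)"
    by (simp add: v_i mult_ac)
  then show ?thesis
    using sr \<open>M > 0\<close> x_pos[OF i(1)] by simp
qed

definition block_start :: "nat \<Rightarrow> nat \<Rightarrow> nat \<Rightarrow> nat" where
  "block_start k t i = i * k + min i t"

text \<open>The first \<open>t\<close> blocks, of order \<open>k + 1\<close>, cover \<open>[0, t (k + 1))\<close>.\<close>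

definition block_of :: "nat \<Rightarrow> nat \<Rightarrow> nat \<Rightarrow> nat" where
  "block_of k t v = (if v < t * (k + 1) then v div (k + 1) else t + (v - t * (k + 1)) div k)"

definition block :: "nat \<Rightarrow> nat \<Rightarrow> nat \<Rightarrow> nat set" where
  "block k t i = {block_start k t i..<block_start k t (Suc i)}"

lemma block_start_Suc: "block_start k t (Suc i) = block_start k t i + k + of_bool (i < t)"
  by (auto simp: block_start_def)

lemma block_start_mono: "i \<le> j \<Longrightarrow> block_start k t i \<le> block_start k t j"
  by (induction j rule: dec_induct) (auto simp: block_start_Suc)

lemma block_start_gap: "i < j \<Longrightarrow> block_start k t i + k \<le> block_start k t j"
  using block_start_mono[of "Suc i" j k t] by (simp add: block_start_Suc)

lemma block_start_eq: "t \<le> \<alpha> \<Longrightarrow> block_start k t \<alpha> = k * \<alpha> + t"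
  by (simp add: block_start_def)

lemma block_of_bounds:
  assumes "k \<ge> 1"
  shows "block_start k t (block_of k t v) \<le> v \<and> v < block_start k t (Suc (block_of k t v))"
proof (cases "v < t * (k + 1)")
  case True
  define q where "q = v div (k + 1)"
  have "block_of k t v = q" "q < t"
    using True by (simp_all add: block_of_def q_def div_less_iff_less_mult)
  moreover have "q * (k + 1) \<le> v" "v < (q + 1) * (k + 1)"
    unfolding q_def
    using div_times_less_eq_dividend[of v "k + 1"] dividend_less_div_times[of "k + 1" v]
    by (simp_all add: algebra_simps)
  ultimately show ?thesis
    by (simp add: block_start_def algebra_simps)
next
  case False
  define r where "r = v - t * (k + 1)"
  define q where "q = r div k"
  have "block_of k t v = t + q"
    using False by (simp add: block_of_def q_def r_def)
  moreover have "q * k \<le> r" "r < (q + 1) * k"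
    unfolding q_def using assms dividend_less_div_times[of k r]
    by (simp_all add: algebra_simps)
  ultimately show ?thesis
    using False by (simp add: block_start_def r_def algebra_simps) linarith
qed

lemma block_of_eq_iff:
  assumes "k \<ge> 1"
  shows "block_of k t v = i \<longleftrightarrow> block_start k t i \<le> v \<and> v < block_start k t (Suc i)"
proof
  assume "block_start k t i \<le> v \<and> v < block_start k t (Suc i)"
  moreover have "block_start k t (block_of k t v) \<le> v \<and> v < block_start k t (Suc (block_of k t v))"
    using block_of_bounds[OF assms] .
  ultimately have "\<not> Suc (block_of k t v) \<le> i" "\<not> Suc i \<le> block_of k t v"
    using block_start_mono[of _ _ k t] by (meson le_trans not_le)+
  then show "block_of k t v = i"
    by simp
qed (use block_of_bounds[OF assms] in auto)

lemma block_of_block_start: "k \<ge> 1 \<Longrightarrow> block_of k t (block_start k t i) = i"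
  using block_start_gap[of i "Suc i" k t] by (simp add: block_of_eq_iff)

lemma block_of_less:
  assumes "k \<ge> 1" and "v < block_start k t \<alpha>"
  shows "block_of k t v < \<alpha>"
  using block_of_bounds[OF assms(1), of t v] block_start_mono[of \<alpha> "block_of k t v" k t] assms(2)
  by linarith

lemma mem_block_iff: "k \<ge> 1 \<Longrightarrow> v \<in> block k t i \<longleftrightarrow> block_of k t v = i"
  by (simp add: block_def block_of_eq_iff)

lemma card_block: "card (block k t i) = k + of_bool (i < t)"
  by (simp add: block_def block_start_Suc)

lemma sym_adj_rel: "sym (adj_rel E)"
  by (auto simp: sym_def adj_rel_def insert_commute)

lemma connected_graph_if_path_edges:
  assumes "\<And>j. Suc j < n \<Longrightarrow> {j, Suc j} \<in> E"
  shows "connected_graph n E"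
proof -
  have forward: "(u, u + d) \<in> (adj_rel E)\<^sup>*" if "u + d < n" for u d
    using that
  proof (induction d)
    case (Suc d)
    then have "(u + d, Suc (u + d)) \<in> adj_rel E"
      using assms by (simp add: adj_rel_def)
    with Suc show ?case
      by (simp add: rtrancl_into_rtrancl)
  qed simp
  have "(u, v) \<in> (adj_rel E)\<^sup>*" if "u < n" "v < n" "u \<le> v" for u v
    using forward[of u "v - u"] that by simp
  then show ?thesis
    unfolding connected_graph_def
    by (meson linear sym_adj_rel sym_rtrancl symD)
qed

definition clique_chain :: "nat \<Rightarrow> nat \<Rightarrow> nat \<Rightarrow> nat set set" where
  "clique_chain k t n =
    {{u, v} | u v. u < n \<and> v < n \<and> u \<noteq> v \<and>
                   (block_of k t u = block_of k t v \<or> Suc u = v \<or> Suc v = u)}"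

lemma doubleton_in_clique_chain_iff:
  "{u, v} \<in> clique_chain k t n \<longleftrightarrow>
    u < n \<and> v < n \<and> u \<noteq> v \<and> (block_of k t u = block_of k t v \<or> Suc u = v \<or> Suc v = u)"
  unfolding clique_chain_def by (auto simp: doubleton_eq_iff)

lemma singleton_notin_clique_chain: "{u} \<notin> clique_chain k t n"
  using doubleton_in_clique_chain_iff[of u u] by simp

lemma simple_graph_clique_chain: "simple_graph n (clique_chain k t n)"
  unfolding simple_graph_def clique_chain_def by auto

lemma connected_graph_clique_chain: "connected_graph n (clique_chain k t n)"
  by (rule connected_graph_if_path_edges) (simp add: doubleton_in_clique_chain_iff)

lemma card_independent_set_clique_chain_le:
  assumes "k \<ge> 1" and "n = block_start k t \<alpha>" and "independent_set n (clique_chain k t n) S"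
  shows "card S \<le> \<alpha>"
proof -
  have S: "S \<subseteq> {0..<n}" and indep: "\<And>u v. u \<in> S \<Longrightarrow> v \<in> S \<Longrightarrow> {u, v} \<notin> clique_chain k t n"
    using assms(3) by (auto simp: independent_set_def)
  have "inj_on (block_of k t) S"
    using S indep by (intro inj_onI) (force simp: doubleton_in_clique_chain_iff subset_iff)
  moreover have "block_of k t ` S \<subseteq> {..<\<alpha>}"
    using S assms(1,2) block_of_less by auto
  ultimately show ?thesis
    by (metis card_image card_lessThan card_mono finite_lessThan)
qed

lemma independent_set_block_starts:
  assumes "k \<ge> 2" and "n = block_start k t \<alpha>"
  shows "independent_set n (clique_chain k t n) (block_start k t ` {..<\<alpha>})"
proof -
  have "block_start k t i < n" if "i < \<alpha>" for i
    using block_start_gap[OF that, of k t] assms by simp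
  moreover have "{block_start k t i, block_start k t j} \<notin> clique_chain k t n" for i j
    using block_start_gap[of i j k t] block_start_gap[of j i k t] assms(1)
      block_of_block_start[of k t] singleton_notin_clique_chain
    by (cases i j rule: linorder_cases) (auto simp: doubleton_in_clique_chain_iff)
  ultimately show ?thesis
    by (auto simp: independent_set_def)
qed

lemma independence_number_clique_chain:
  assumes "k \<ge> 2" and "n = block_start k t \<alpha>"
  shows "independence_number n (clique_chain k t n) = \<alpha>"
  unfolding independence_number_def
proof (rule Max_eqI)
  show "finite (card ` {S. independent_set n (clique_chain k t n) S})"
    by (rule finite_imageI, rule finite_subset[of _ "Pow {0..<n}"]) (auto simp: independent_set_def)
  have "inj_on (block_start k t) {..<\<alpha>}"
    using assms(1) by (metis block_of_block_start inj_onI one_le_numeral order_trans)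
  then show "\<alpha> \<in> card ` {S. independent_set n (clique_chain k t n) S}"
    using independent_set_block_starts[OF assms] by (metis card_image card_lessThan image_eqI mem_Collect_eq)
  show "m \<le> \<alpha>" if "m \<in> card ` {S. independent_set n (clique_chain k t n) S}" for m
    using that card_independent_set_clique_chain_le[of k n t \<alpha>] assms by auto
qed

definition max_block_size :: "nat \<Rightarrow> nat \<Rightarrow> real" where
  "max_block_size k t = real k + of_bool (t > 0)"

definition is_block_end :: "nat \<Rightarrow> nat \<Rightarrow> nat \<Rightarrow> bool" where
  "is_block_end k t v \<longleftrightarrow>
    v = block_start k t (block_of k t v) \<or> Suc v = block_start k t (Suc (block_of k t v))"

definition chain_weight :: "nat \<Rightarrow> nat \<Rightarrow> nat \<Rightarrow> real" where
  "chain_weight k t v = max_block_size k t - 1 + of_bool (is_block_end k t v)"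

lemma card_block_le_max_block_size: "real (card (block k t i)) \<le> max_block_size k t"
  by (simp add: card_block max_block_size_def)

lemma chain_weight_pos: "k \<ge> 2 \<Longrightarrow> chain_weight k t v > 0"
  by (simp add: chain_weight_def max_block_size_def)

lemma chain_weight_le: "chain_weight k t v \<le> max_block_size k t"
  by (simp add: chain_weight_def)

lemma sum_chain_weight_block:
  assumes "k \<ge> 2"
  shows "(\<Sum>j\<in>block k t i. chain_weight k t j) \<le> (max_block_size k t - 1) * card (block k t i) + 2"
proof -
  define a b where "a = block_start k t i" and "b = block_start k t (Suc i)"
  have B: "block k t i = {a..<b}" and "a + 2 \<le> b"
    using assms by (auto simp: a_def b_def block_def block_start_Suc)
  have "chain_weight k t j \<le> max_block_size k t - 1 + of_bool (j = a) + of_bool (j = b - 1)"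
    if "j \<in> {a..<b}" for j
    using that assms mem_block_iff[of k j t i]
    by (auto simp: B chain_weight_def is_block_end_def a_def b_def)
  then have "(\<Sum>j\<in>{a..<b}. chain_weight k t j)
      \<le> (\<Sum>j\<in>{a..<b}. max_block_size k t - 1 + of_bool (j = a) + of_bool (j = b - 1))"
    by (rule sum_mono)
  also have "\<dots> = (max_block_size k t - 1) * card {a..<b} + 2"
    using \<open>a + 2 \<le> b\<close> by (simp add: sum.distrib)
  finally show ?thesis
    by (simp add: B)
qed

lemma sum_chain_weight_neighbours_outside_block:
  assumes "k \<ge> 2"
  shows "(\<Sum>j\<in>{..<n} - block k t (block_of k t v).
            of_bool ({v, j} \<in> clique_chain k t n) * chain_weight k t j)
         \<le> max_block_size k t * of_bool (is_block_end k t v)"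
proof -
  define a b where "a = block_start k t (block_of k t v)" and "b = block_start k t (Suc (block_of k t v))"
  define N where "N = ({..<n} - {a..<b}) \<inter> {j. {v, j} \<in> clique_chain k t n}"
  have "a \<le> v" "v < b" "a + 2 \<le> b"
    using assms block_of_bounds[of k t v] by (auto simp: a_def b_def block_start_Suc)
  have B: "block k t (block_of k t v) = {a..<b}"
    by (simp add: block_def a_def b_def)
  have adjacent: "Suc v = j \<or> Suc j = v" if "j \<in> N" for j
    using that assms mem_block_iff[of k j t "block_of k t v"]
    by (auto simp: N_def B doubleton_in_clique_chain_iff)
  have "N \<subseteq> {Suc v}" if "Suc v = b"
    using adjacent \<open>a + 2 \<le> b\<close> that by (force simp: N_def)
  moreover have "N \<subseteq> {v - 1}" if "v = a"
    using adjacent \<open>a + 2 \<le> b\<close> that by (force simp: N_def)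
  moreover have "N = {}" if "\<not> is_block_end k t v"
    using adjacent that \<open>a \<le> v\<close> \<open>v < b\<close> by (force simp: N_def is_block_end_def a_def b_def)
  ultimately have "card N \<le> of_bool (is_block_end k t v)"
    by (cases "is_block_end k t v")
      (auto simp: is_block_end_def a_def b_def subset_singleton_iff)
  have "(\<Sum>j\<in>{..<n} - {a..<b}. of_bool ({v, j} \<in> clique_chain k t n) * chain_weight k t j)
      = (\<Sum>j\<in>N. chain_weight k t j)"
    by (simp add: N_def sum.inter_restrict)
  also have "\<dots> \<le> card N * max_block_size k t"
    by (rule sum_bounded_above) (rule chain_weight_le)
  also have "\<dots> \<le> max_block_size k t * of_bool (is_block_end k t v)"
    using \<open>card N \<le> of_bool (is_block_end k t v)\<close> assms
    by (cases "is_block_end k t v") (auto simp: max_block_size_def)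
  finally show ?thesis
    by (simp add: B)
qed

lemma sum_chain_weight_neighbours:
  assumes "k \<ge> 2" and "n = block_start k t \<alpha>" and "v < n"
  shows "(\<Sum>j<n. of_bool ({v, j} \<in> clique_chain k t n) * chain_weight k t j)
         \<le> (max_block_size k t - 1) * chain_weight k t v + 2"
proof -
  define B where "B = block k t (block_of k t v)"
  define m where "m = max_block_size k t"
  define f where "f j = of_bool ({v, j} \<in> clique_chain k t n) * chain_weight k t j" for j
  have "block_of k t v < \<alpha>"
    using assms by (simp add: block_of_less)
  then have "B \<subseteq> {..<n}"
    using assms(2) block_start_mono[of "Suc (block_of k t v)" \<alpha> k t] by (auto simp: B_def block_def)
  have "v \<in> B"
    using assms(1) by (simp add: B_def mem_block_iff)
  have "f v = 0"
    by (simp add: f_def singleton_notin_clique_chain)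
  have "f j = chain_weight k t j" if "j \<in> B - {v}" for j
    using that \<open>B \<subseteq> {..<n}\<close> \<open>v \<in> B\<close> assms(1) mem_block_iff[of k _ t]
    by (auto simp: f_def B_def doubleton_in_clique_chain_iff)
  moreover have "finite B"
    by (simp add: B_def block_def)
  ultimately have sum_B: "(\<Sum>j\<in>B. f j) = (\<Sum>j\<in>B. chain_weight k t j) - chain_weight k t v"
    using \<open>v \<in> B\<close> \<open>f v = 0\<close> by (simp add: sum.remove[of B v])
  have "(m - 1) * card B \<le> (m - 1) * m"
    using assms(1) card_block_le_max_block_size[of k t]
    by (intro mult_left_mono) (simp_all add: B_def m_def max_block_size_def)
  then have "(\<Sum>j\<in>B. f j) \<le> (m - 1) * m + 2 - chain_weight k t v"
    using sum_B sum_chain_weight_block[OF assms(1), of t "block_of k t v"]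
    unfolding B_def m_def by linarith
  moreover have "(\<Sum>j\<in>{..<n} - B. f j) \<le> m * of_bool (is_block_end k t v)"
    unfolding f_def B_def m_def by (rule sum_chain_weight_neighbours_outside_block[OF assms(1)])
  ultimately have "(\<Sum>j<n. f j) \<le> (m - 1) * m + 2 - chain_weight k t v + m * of_bool (is_block_end k t v)"
    using sum.subset_diff[OF \<open>B \<subseteq> {..<n}\<close>, of f] by simp
  also have "\<dots> = (m - 1) * chain_weight k t v + 2"
    by (simp add: chain_weight_def m_def algebra_simps)
  finally show ?thesis
    by (simp add: f_def m_def)
qed

lemma norm_adjacency_matrix_entry:
  "i < n \<Longrightarrow> j < n \<Longrightarrow> norm (adjacency_matrix n E $$ (i, j)) = of_bool ({i, j} \<in> E)"
  by (simp add: adjacency_matrix_def)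

lemma graph_spectral_radius_clique_chain_le:
  assumes "k \<ge> 2" and "n = block_start k t \<alpha>" and "\<alpha> > 0"
  shows "graph_spectral_radius n (clique_chain k t n)
         \<le> max_block_size k t - 1 + 2 / (max_block_size k t - 1)"
  unfolding graph_spectral_radius_def
proof (rule spectral_radius_le_weighted_row_bound)
  show "adjacency_matrix n (clique_chain k t n) \<in> carrier_mat n n"
    by (simp add: adjacency_matrix_def)
  show "n > 0"
    using assms block_start_gap[of 0 \<alpha> k t] by simp
  show "chain_weight k t v > 0" for v
    using assms(1) by (rule chain_weight_pos)
  fix v assume "v < n"
  define c where "c = max_block_size k t - 1"
  have "1 \<le> c" "c \<le> chain_weight k t v"
    using assms(1) by (auto simp: c_def chain_weight_def max_block_size_def)
  then have "2 \<le> 2 / c * chain_weight k t v"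
    by (simp add: field_simps)
  moreover have "(\<Sum>j<n. norm (adjacency_matrix n (clique_chain k t n) $$ (v, j)) * chain_weight k t j)
      \<le> c * chain_weight k t v + 2"
    using sum_chain_weight_neighbours[OF assms(1,2) \<open>v < n\<close>] \<open>v < n\<close>
    by (simp add: norm_adjacency_matrix_entry c_def)
  ultimately show "(\<Sum>j<n. norm (adjacency_matrix n (clique_chain k t n) $$ (v, j)) * chain_weight k t j)
      \<le> (c + 2 / c) * chain_weight k t v"
    by (simp add: algebra_simps)
qed

lemma lambda_min_le:
  assumes "E \<in> graph_class n \<alpha>"
  shows "lambda_min n \<alpha> \<le> graph_spectral_radius n E"
proof -
  have "graph_class n \<alpha> \<subseteq> Pow (Pow {0..<n})"
    by (auto simp: graph_class_def simple_graph_def)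
  then have "finite (graph_class n \<alpha>)"
    by (rule finite_subset) simp
  then show ?thesis
    unfolding lambda_min_def using assms by simp
qed

theorem lemma2p2:
  fixes \<alpha> k t n :: nat
  assumes "\<alpha> \<ge> 2" and "k \<ge> 2" and "t < \<alpha>" and "n = k * \<alpha> + t"
  shows "lambda_min n \<alpha> \<le>
    (if t = 0 then real k - 1 + 2 / (real k - 1) else real k + 2 / real k)"
proof -
  have n: "n = block_start k t \<alpha>"
    using assms(3,4) by (simp add: block_start_eq)
  have "clique_chain k t n \<in> graph_class n \<alpha>"
    using independence_number_clique_chain[OF assms(2) n]
    by (simp add: graph_class_def simple_graph_clique_chain connected_graph_clique_chain)
  then have "lambda_min n \<alpha> \<le> graph_spectral_radius n (clique_chain k t n)"
    by (rule lambda_min_le)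
  also have "\<dots> \<le> max_block_size k t - 1 + 2 / (max_block_size k t - 1)"
    using graph_spectral_radius_clique_chain_le[OF assms(2) n] assms(1) by simp
  finally show ?thesis
    by (cases "t = 0") (simp_all add: max_block_size_def)
qed

end
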